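(* Let $a\in[0,4)$. Then for every $s\in Q_a$, $\lim_{n\to\infty}W^n(s)=(0,0,0,0)$.
   Context: $W:\mathbb{R}^4\to\mathbb{R}^4$ is the map $W(x,y,u,v)=(x',y',u',v')$ with $x'=\tfrac12 xu+\tfrac14 yu$, $y'=\tfrac12 xv+\tfrac14 yu+\tfrac13 yv$, $u'=\tfrac12 xu+\tfrac12 xv+\tfrac14 yu+\tfrac13 yv$, $v'=\tfrac14 yu+\tfrac13 yv$. $W^n$ denotes the $n$-fold iterate. $P=\{(x,y,u,v): x,y,u,v\ge0\}$ and $Q_a=\{(x,y,u,v)\in P: x+y+u+v\le a\}$. *)

theory Defs
  imports "HOL-Analysis.Analysis"
begin

definition W :: "real \<times> real \<times> real \<times> real \<Rightarrow> real \<times> real \<times> real \<times> real" where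
  "W s = (case s of (x, y, u, v) \<Rightarrow>
     (x * u/2 + y * u/4,
      x* v/2 + y * u/4 + y* v/3,
      x * u/2 + x* v/2 + y * u/4 + y* v/3,
      y * u/4 + y* v/3))"

definition P :: "(real \<times> real \<times> real \<times> real) set" where
  "P = {(x, y, u, v). x \<ge> 0 \<and> y \<ge> 0 \<and> u \<ge> 0 \<and> v \<ge> 0}"

definition Q :: "real \<Rightarrow> (real \<times> real \<times> real \<times> real) set" where
  "Q a = {(x, y, u, v). (x, y, u, v) \<in> P \<and> x + y + u + v \<le> a}"

end

theory Submission
  imports Defs
begin

text \<open>The coordinate sum \<open>\<sigma>\<close> of \<open>W s\<close> factors as \<open>(x + y)(u + v)\<close>, so by AM-GM
  \<open>\<sigma>(W s) \<le> \<sigma>(s)\<^sup>2 / 4\<close>. On the invariant cone \<open>P\<close> this gives \<open>\<sigma>(W\<^sup>n s) \<le> a (a/4)\<^sup>n\<close>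
  for \<open>\<sigma>(s) \<le> a\<close>, which tends to \<open>0\<close> when \<open>a < 4\<close>; and on \<open>P\<close> the norm is bounded
  by \<open>\<sigma>\<close>.\<close>

definition coord_sum :: "real \<times> real \<times> real \<times> real \<Rightarrow> real" where
  "coord_sum s = (case s of (x, y, u, v) \<Rightarrow> x + y + u + v)"

lemma W_in_P: "s \<in> P \<Longrightarrow> W s \<in> P"
  by (cases s) (auto simp: P_def W_def)

lemma funpow_W_in_P: "s \<in> P \<Longrightarrow> (W ^^ n) s \<in> P"
  by (induction n) (auto simp: W_in_P)

lemma coord_sum_nonneg: "s \<in> P \<Longrightarrow> 0 \<le> coord_sum s"
  by (cases s) (auto simp: P_def coord_sum_def)

lemma coord_sum_W: "coord_sum (W (x, y, u, v)) = (x + y) * (u + v)"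
  by (simp add: coord_sum_def W_def algebra_simps)

lemma mult_le_square_half_sum: "(p::real) * q \<le> (p + q)\<^sup>2 / 4"
proof -
  have "(p + q)\<^sup>2 / 4 - p * q = (p - q)\<^sup>2 / 4"
    by (simp add: power2_eq_square field_simps)
  then show ?thesis
    by (metis diff_ge_0_iff_ge divide_nonneg_pos zero_le_power2 zero_less_numeral)
qed

lemma coord_sum_W_le: "coord_sum (W s) \<le> (coord_sum s)\<^sup>2 / 4"
proof (cases s)
  case (fields x y u v)
  then show ?thesis
    using mult_le_square_half_sum[of "x + y" "u + v"]
    by (simp only: coord_sum_W) (simp add: coord_sum_def add.assoc)
qed

lemma coord_sum_funpow_W_le:
  assumes "0 \<le> a" "a \<le> 4" "s \<in> P" "coord_sum s \<le> a"
  shows "coord_sum ((W ^^ n) s) \<le> a * (a / 4) ^ n"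
proof (induction n)
  case 0
  then show ?case using assms(4) by simp
next
  case (Suc n)
  let ?t = "(W ^^ n) s"
  have t_nonneg: "0 \<le> coord_sum ?t"
    using coord_sum_nonneg funpow_W_in_P assms(3) by blast
  have "a * (a / 4) ^ n \<le> a"
    using assms(1,2) by (simp add: mult_left_le power_le_one)
  then have t_le_a: "coord_sum ?t \<le> a"
    using Suc.IH by linarith
  have "coord_sum (W ?t) \<le> coord_sum ?t * coord_sum ?t / 4"
    using coord_sum_W_le by (simp add: power2_eq_square)
  also have "\<dots> \<le> (a * (a / 4) ^ n) * a / 4"
    using mult_mono[OF Suc.IH t_le_a] t_nonneg assms(1) by (simp add: divide_right_mono)
  also have "\<dots> = a * (a / 4) ^ Suc n"
    by simp
  finally show ?case
    by simp
qed

lemma norm_le_coord_sum: "s \<in> P \<Longrightarrow> norm s \<le> coord_sum s"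
proof (cases s)
  case (fields x y u v)
  assume "s \<in> P"
  then have nonneg: "0 \<le> x" "0 \<le> y" "0 \<le> u" "0 \<le> v"
    using fields by (auto simp: P_def)
  have "norm (x, y, u, v) \<le> norm x + (norm y + (norm u + norm v))"
    by (meson add_left_mono norm_Pair_le order_trans)
  then show ?thesis
    using fields nonneg by (simp add: coord_sum_def add.assoc)
qed

theorem lemma3p2:
  fixes a :: real and s :: "real \<times> real \<times> real \<times> real"
  assumes "0 \<le> a" and "a < 4" and "s \<in> Q a"
  shows "(\<lambda>n. (W ^^ n) s) \<longlonglongrightarrow> (0, 0, 0, 0)"
proof -
  have sP: "s \<in> P" and s_le: "coord_sum s \<le> a"
    using assms(3) by (auto simp: Q_def coord_sum_def)
  have norm_bound: "norm ((W ^^ n) s) \<le> a * (a / 4) ^ n" for n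
    using norm_le_coord_sum[OF funpow_W_in_P[OF sP], of n]
      coord_sum_funpow_W_le[OF assms(1) _ sP s_le, of n] assms(2) by linarith
  have "(\<lambda>n. a * (a / 4) ^ n) \<longlonglongrightarrow> 0"
    using assms(1,2) by (intro tendsto_mult_right_zero LIMSEQ_power_zero) auto
  then have "(\<lambda>n. (W ^^ n) s) \<longlonglongrightarrow> 0"
    by (rule Lim_null_comparison[rotated]) (simp add: norm_bound)
  then show ?thesis
    by (simp add: zero_prod_def)
qed

end
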